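(* Let $p$ be a prime, let $P$ be a finite $p$-group, and let $a\in P$ have order $p$. Assume there exists an elementary abelian subgroup of $P$ which is normalized but not centralized by $a$. Then there is an elementary abelian subgroup $X$ of $P$ of order $p^2$ such that $|a^P\cap X|=p$ and $X\cap P'\neq 1$.
   Context: $a^P$ denotes the conjugacy class of $a$ in $P$, and $P'$ the derived subgroup of $P$. *)

theory Defs
  imports "HOL-Algebra.Algebra"
begin

definition elem_abelian_subgroup :: "('a, 'b) monoid_scheme \<Rightarrow> nat \<Rightarrow> 'a set \<Rightarrow> bool" where
  "elem_abelian_subgroup G p E \<longleftrightarrow> subgroup E G
     \<and> (\<forall>x\<in>E. \<forall>y\<in>E. x \<otimes>\<^bsub>G\<^esub> y = y \<otimes>\<^bsub>G\<^esub> x)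
     \<and> (\<forall>x\<in>E. x [^]\<^bsub>G\<^esub> p = \<one>\<^bsub>G\<^esub>)"

definition normalizes :: "('a, 'b) monoid_scheme \<Rightarrow> 'a \<Rightarrow> 'a set \<Rightarrow> bool" where
  "normalizes G a E \<longleftrightarrow> (\<lambda>x. a \<otimes>\<^bsub>G\<^esub> x \<otimes>\<^bsub>G\<^esub> inv\<^bsub>G\<^esub> a) ` E = E"

definition centralizes :: "('a, 'b) monoid_scheme \<Rightarrow> 'a \<Rightarrow> 'a set \<Rightarrow> bool" where
  "centralizes G a E \<longleftrightarrow> (\<forall>x\<in>E. a \<otimes>\<^bsub>G\<^esub> x = x \<otimes>\<^bsub>G\<^esub> a)"

definition conj_class :: "('a, 'b) monoid_scheme \<Rightarrow> 'a \<Rightarrow> 'a set" where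
  "conj_class G a = {g \<otimes>\<^bsub>G\<^esub> a \<otimes>\<^bsub>G\<^esub> inv\<^bsub>G\<^esub> g | g. g \<in> carrier G}"

end

(*
  A finite p-group P is nilpotent: its upper central series reaches P. Hence a lies in
  \<zeta>_(k+1) but not in \<zeta>_k for some k, so every conjugate of a lies in a \<zeta>_k, while the powers
  a^i with 0 < i < p avoid \<zeta>_k. Let w be an element of E, in the lowest possible term of the
  series, that does not commute with a. Then c = a\<inverse>waw\<inverse> lies in E one term lower, so it
  commutes with a; also c \<noteq> 1, c \<in> P' \<inter> \<zeta>_k, and w^l a w^-l = a c^l as E is abelian.
  So X = <a> \<times> <c> is elementary abelian of order p^2, and its elements conjugate to a are
  exactly the p elements a c^l, since a^i c^l \<in> a \<zeta>_k forces i = 1.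
*)
theory Submission
  imports Defs
begin

definition (in group_action) fixed_points :: "'c set" where
  "fixed_points = {x \<in> E. \<forall>g\<in>carrier G. \<phi> g x = x}"

lemma (in group_action) orbit_eq_singleton_iff:
  assumes "x \<in> E"
  shows "orbit G \<phi> x = {x} \<longleftrightarrow> x \<in> fixed_points"
  using orbit_refl[OF assms] assms unfolding orbit_def fixed_points_def by auto

lemma (in group_action) orbit_inter_fixed_points:
  assumes "x \<in> E"
  shows "orbit G \<phi> x \<inter> fixed_points = (if x \<in> fixed_points then {x} else {})"
proof (cases "x \<in> fixed_points")
  case True
  then show ?thesis using orbit_eq_singleton_iff[OF assms] by simp
next
  case False
  have "y \<notin> fixed_points" if "y \<in> orbit G \<phi> x" for y
  proof
    assume y: "y \<in> fixed_points"
    then have "y \<in> E" unfolding fixed_points_def by simp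
    then have "x \<in> orbit G \<phi> y"
      using orbit_sym[OF assms] that by blast
    then show False
      using False y orbit_eq_singleton_iff[OF \<open>y \<in> E\<close>] by simp
  qed
  then show ?thesis using False by auto
qed

lemma (in group_action) card_eq_sum_orbits:
  assumes "finite E" and "A \<subseteq> E"
  shows "card A = (\<Sum>orb\<in>orbits G E \<phi>. card (orb \<inter> A))"
proof -
  have "card A = (\<Sum>x\<in>E. if x \<in> A then 1 else 0)"
    using assms by (simp add: sum.If_cases Int_absorb1)
  also have "\<dots> = (\<Sum>orb\<in>orbits G E \<phi>. \<Sum>x\<in>orb. if x \<in> A then 1 else 0)"
    using disjoint_sum[OF \<open>finite E\<close>] by (rule sym)
  also have "\<dots> = (\<Sum>orb\<in>orbits G E \<phi>. card (orb \<inter> A))"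
  proof (rule sum.cong[OF refl])
    fix orb assume "orb \<in> orbits G E \<phi>"
    then have "finite orb"
      using orbits_coverture \<open>finite E\<close> by (metis Union_upper finite_subset)
    then show "(\<Sum>x\<in>orb. if x \<in> A then 1 else 0) = card (orb \<inter> A)"
      by (simp add: sum.If_cases)
  qed
  finally show ?thesis .
qed

text \<open>Orbits of a p-group have p-power size, so only the singleton orbits survive modulo p.\<close>

lemma (in group_action) card_orbit_cong_fixed_points:
  assumes p: "Factorial_Ring.prime (p::nat)" and "order G = p ^ n" and x: "x \<in> E"
  shows "card (orbit G \<phi> x) mod p = card (orbit G \<phi> x \<inter> fixed_points) mod p"
proof (cases "x \<in> fixed_points")
  case True
  then show ?thesis using orbit_inter_fixed_points[OF x] orbit_eq_singleton_iff[OF x] by simp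
next
  case False
  have "card (orbit G \<phi> x) dvd p ^ n"
    using orbit_stabilizer_theorem[OF x] \<open>order G = p ^ n\<close> by (metis dvd_triv_left)
  then obtain i where i: "card (orbit G \<phi> x) = p ^ i"
    using divides_primepow_nat[OF p] by blast
  have "card (orbit G \<phi> x) \<noteq> 1"
    using False orbit_eq_singleton_iff[OF x] orbit_refl[OF x]
    by (metis card_1_singletonE singletonD)
  then have "p dvd card (orbit G \<phi> x)" using i by (cases i) auto
  then show ?thesis using orbit_inter_fixed_points[OF x] False by simp
qed

lemma (in group_action) card_fixed_points_cong:
  assumes "finite E" and p: "Factorial_Ring.prime (p::nat)" and "order G = p ^ n"
  shows "card E mod p = card fixed_points mod p"
proof -
  have orbit_cong: "card orb mod p = card (orb \<inter> fixed_points) mod p"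
    if "orb \<in> orbits G E \<phi>" for orb
    using that card_orbit_cong_fixed_points[OF p \<open>order G = p ^ n\<close>] unfolding orbits_def by blast
  have "card E = (\<Sum>orb\<in>orbits G E \<phi>. card orb)"
  proof -
    have "orb \<inter> E = orb" if "orb \<in> orbits G E \<phi>" for orb
      using orbits_coverture that by blast
    then show ?thesis
      using card_eq_sum_orbits[OF \<open>finite E\<close> subset_refl] by simp
  qed
  then have "card E mod p = (\<Sum>orb\<in>orbits G E \<phi>. card orb mod p) mod p"
    by (simp add: mod_sum_eq)
  also have "\<dots> = (\<Sum>orb\<in>orbits G E \<phi>. card (orb \<inter> fixed_points) mod p) mod p"
    using orbit_cong by (simp cong: sum.cong)
  also have "\<dots> = card fixed_points mod p"
    using card_eq_sum_orbits[OF \<open>finite E\<close>, of fixed_points]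
    by (simp add: mod_sum_eq fixed_points_def)
  finally show ?thesis .
qed

lemma (in group) p_group_center_nontrivial:
  assumes fin: "finite (carrier G)" and p: "Factorial_Ring.prime (p::nat)"
    and ord: "order G = p ^ n" and "n \<noteq> 0"
  obtains z where "z \<in> carrier G" "z \<noteq> \<one>" "\<forall>g\<in>carrier G. g \<otimes> z = z \<otimes> g"
proof -
  interpret conj: group_action G "carrier G" "\<lambda>g. \<lambda>h\<in>carrier G. g \<otimes> h \<otimes> inv g"
    by (rule action_by_conjugation)
  let ?F = "conj.fixed_points"
  have F: "?F = {z \<in> carrier G. \<forall>g\<in>carrier G. g \<otimes> z \<otimes> inv g = z}"
    unfolding conj.fixed_points_def by auto
  have "card ?F mod p = 0"
    using conj.card_fixed_points_cong[OF fin p ord] ord \<open>n \<noteq> 0\<close> unfolding order_def by simp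
  moreover have "\<one> \<in> ?F" using F by simp
  ultimately have "?F \<noteq> {\<one>}" using prime_gt_1_nat[OF p] by auto
  then obtain z where z: "z \<in> ?F" "z \<noteq> \<one>" using \<open>\<one> \<in> ?F\<close> by blast
  have "g \<otimes> z = z \<otimes> g" if g: "g \<in> carrier G" for g
  proof -
    have "z \<in> carrier G" "g \<otimes> z \<otimes> inv g = z" using z g F by auto
    then have "(g \<otimes> z \<otimes> inv g) \<otimes> g = z \<otimes> g" by simp
    then show ?thesis using g \<open>z \<in> carrier G\<close> by (simp add: m_assoc)
  qed
  then show ?thesis using that z F by blast
qed

text \<open>\<open>\<zeta>\<^sub>k\<^sub>+\<^sub>1/\<zeta>\<^sub>k\<close> is the centre of \<open>G/\<zeta>\<^sub>k\<close>, phrased without quotients via the commutators \<open>x\<inverse>g\<inverse>xg\<close>.\<close>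

primrec upper_central :: "('a, 'b) monoid_scheme \<Rightarrow> nat \<Rightarrow> 'a set" where
  "upper_central G 0 = {\<one>\<^bsub>G\<^esub>}"
| "upper_central G (Suc k) = {x \<in> carrier G. \<forall>g\<in>carrier G.
      inv\<^bsub>G\<^esub> x \<otimes>\<^bsub>G\<^esub> inv\<^bsub>G\<^esub> g \<otimes>\<^bsub>G\<^esub> x \<otimes>\<^bsub>G\<^esub> g \<in> upper_central G k}"

context group
begin

lemma inv_mult_cancel [simp]: "x \<in> carrier G \<Longrightarrow> y \<in> carrier G \<Longrightarrow> inv x \<otimes> (x \<otimes> y) = y"
  by (simp add: m_assoc[symmetric])

lemma mult_inv_cancel [simp]: "x \<in> carrier G \<Longrightarrow> y \<in> carrier G \<Longrightarrow> x \<otimes> (inv x \<otimes> y) = y"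
  by (simp add: m_assoc[symmetric])

lemma commutator_inv_left:
  "x \<in> carrier G \<Longrightarrow> g \<in> carrier G \<Longrightarrow>
    x \<otimes> inv g \<otimes> inv x \<otimes> g = inv (x \<otimes> (inv x \<otimes> inv g \<otimes> x \<otimes> g) \<otimes> inv x)"
  by (simp add: m_assoc inv_mult_group)

lemma commutator_mult_left:
  "x \<in> carrier G \<Longrightarrow> y \<in> carrier G \<Longrightarrow> g \<in> carrier G \<Longrightarrow>
    inv (x \<otimes> y) \<otimes> inv g \<otimes> (x \<otimes> y) \<otimes> g
      = (inv y \<otimes> (inv x \<otimes> inv g \<otimes> x \<otimes> g) \<otimes> inv (inv y)) \<otimes> (inv y \<otimes> inv g \<otimes> y \<otimes> g)"
  by (simp add: m_assoc inv_mult_group)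

lemma upper_central_subset: "upper_central G k \<subseteq> carrier G"
  by (cases k) auto

lemma upper_central_mono: "upper_central G k \<subseteq> upper_central G (Suc k)"
  by (induction k) auto

lemma upper_central_conj_closed:
  "x \<in> upper_central G k \<Longrightarrow> h \<in> carrier G \<Longrightarrow> h \<otimes> x \<otimes> inv h \<in> upper_central G k"
proof (induction k arbitrary: x h)
  case (Suc k)
  have x: "x \<in> carrier G" using Suc.prems by simp
  have "inv (h \<otimes> x \<otimes> inv h) \<otimes> inv g \<otimes> (h \<otimes> x \<otimes> inv h) \<otimes> g \<in> upper_central G k"
    if g: "g \<in> carrier G" for g
  proof -
    define g' where "g' = inv h \<otimes> g \<otimes> h"
    have "g' \<in> carrier G" using g Suc.prems g'_def by simp
    then have "inv x \<otimes> inv g' \<otimes> x \<otimes> g' \<in> upper_central G k" using Suc.prems by simp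
    then have "h \<otimes> (inv x \<otimes> inv g' \<otimes> x \<otimes> g') \<otimes> inv h \<in> upper_central G k"
      using Suc.IH Suc.prems by blast
    moreover have "h \<otimes> (inv x \<otimes> inv g' \<otimes> x \<otimes> g') \<otimes> inv h
        = inv (h \<otimes> x \<otimes> inv h) \<otimes> inv g \<otimes> (h \<otimes> x \<otimes> inv h) \<otimes> g"
      using x g Suc.prems unfolding g'_def by (simp add: m_assoc inv_mult_group)
    ultimately show ?thesis by simp
  qed
  then show ?case using x Suc.prems by simp
qed simp

lemma upper_central_subgroup: "subgroup (upper_central G k) G"
proof (induction k)
  case 0
  then show ?case using triv_subgroup by simp
next
  case (Suc k)
  interpret Z: subgroup "upper_central G k" G by (rule Suc.IH)
  show ?case
  proof (rule subgroupI)
    show "upper_central G (Suc k) \<subseteq> carrier G" by (rule upper_central_subset)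
    show "upper_central G (Suc k) \<noteq> {}" by force
  next
    fix x assume x: "x \<in> upper_central G (Suc k)"
    have "inv (x \<otimes> (inv x \<otimes> inv g \<otimes> x \<otimes> g) \<otimes> inv x) \<in> upper_central G k"
      if "g \<in> carrier G" for g
      using x that upper_central_conj_closed by simp
    then show "inv x \<in> upper_central G (Suc k)"
      using x by (simp add: commutator_inv_left)
  next
    fix x y assume x: "x \<in> upper_central G (Suc k)" and y: "y \<in> upper_central G (Suc k)"
    have "inv y \<otimes> (inv x \<otimes> inv g \<otimes> x \<otimes> g) \<otimes> inv (inv y) \<in> upper_central G k"
      if "g \<in> carrier G" for g
      using x y that upper_central_conj_closed[of "inv x \<otimes> inv g \<otimes> x \<otimes> g" k "inv y"] by simp
    then show "x \<otimes> y \<in> upper_central G (Suc k)"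
      using x y by (simp add: commutator_mult_left)
  qed
qed

lemma upper_central_normal: "upper_central G k \<lhd> G"
  using upper_central_subgroup upper_central_conj_closed normal_inv_iff by blast

lemma upper_central_Suc_commutator:
  assumes "x \<in> upper_central G (Suc k)" and g: "g \<in> carrier G"
  shows "inv g \<otimes> x \<otimes> g \<otimes> inv x \<in> upper_central G k"
proof -
  have x: "x \<in> carrier G" using assms(1) by simp
  have "inv x \<otimes> inv g \<otimes> x \<otimes> g \<in> upper_central G k" using assms by simp
  then have "x \<otimes> (inv x \<otimes> inv g \<otimes> x \<otimes> g) \<otimes> inv x \<in> upper_central G k"
    using x upper_central_conj_closed by blast
  moreover have "x \<otimes> (inv x \<otimes> inv g \<otimes> x \<otimes> g) \<otimes> inv x = inv g \<otimes> x \<otimes> g \<otimes> inv x"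
    using x g by (simp add: m_assoc)
  ultimately show ?thesis by simp
qed

lemma p_group_upper_central_grows:
  assumes fin: "finite (carrier G)" and p: "Factorial_Ring.prime (p::nat)" and ord: "order G = p ^ n"
    and proper: "upper_central G k \<noteq> carrier G"
  shows "upper_central G k \<subset> upper_central G (Suc k)"
proof -
  define Z where "Z = upper_central G k"
  interpret Z: normal Z G unfolding Z_def by (rule upper_central_normal)
  interpret Q: group "G Mod Z" by (rule Z.factorgroup_is_group)
  have lagrange: "card (rcosets Z) * card Z = p ^ n"
    using lagrange[OF Z.subgroup_axioms] ord by simp
  then obtain m where m: "card (rcosets Z) = p ^ m"
    using divides_primepow_nat[OF p] by (metis dvd_triv_left)
  have "m \<noteq> 0"
  proof
    assume "m = 0"
    then have "card Z = card (carrier G)" using lagrange m ord unfolding order_def by simp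
    then show False using card_subset_eq[OF fin Z.subset] proper Z_def by simp
  qed
  moreover have "finite (carrier (G Mod Z))"
    using fin rcosets_subset_PowG[OF Z.subgroup_axioms] by (simp add: FactGroup_def finite_subset)
  ultimately obtain W where W: "W \<in> rcosets Z" "W \<noteq> Z"
    and W_central: "\<forall>C\<in>rcosets Z. C <#> W = W <#> C"
    using Q.p_group_center_nontrivial[OF _ p] m unfolding FactGroup_def order_def by auto
  then obtain x where x: "x \<in> carrier G" and W_x: "W = Z #> x" unfolding RCOSETS_def by blast
  have "x \<notin> Z" using W W_x coset_join2[OF x Z.subgroup_axioms] by blast
  moreover have "inv x \<otimes> inv g \<otimes> x \<otimes> g \<in> Z" if g: "g \<in> carrier G" for g
  proof -
    have "Z #> (g \<otimes> x) = Z #> (x \<otimes> g)"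
      using W_central[rule_format, of "Z #> g"] W_x g x Z.rcos_sum by (simp add: rcosetsI Z.subset)
    then have "x \<otimes> g \<in> Z #> (g \<otimes> x)"
      using rcos_self[OF _ Z.subgroup_axioms] x g by simp
    then have "(x \<otimes> g) \<otimes> inv (g \<otimes> x) \<in> Z"
      using Z.rcos_module_imp[OF is_group] x g by simp
    then have "(inv g \<otimes> inv x) \<otimes> ((x \<otimes> g) \<otimes> inv (g \<otimes> x)) \<otimes> inv (inv g \<otimes> inv x) \<in> Z"
      using upper_central_conj_closed x g unfolding Z_def by simp
    then show ?thesis using x g by (simp add: m_assoc inv_mult_group)
  qed
  ultimately show ?thesis using x upper_central_mono unfolding Z_def by auto
qed

lemma p_group_upper_central_top:
  assumes fin: "finite (carrier G)" and p: "Factorial_Ring.prime (p::nat)" and ord: "order G = p ^ n"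
  obtains N where "upper_central G N = carrier G"
proof -
  have "upper_central G k = carrier G \<or> k \<le> card (upper_central G k)" for k
  proof (induction k)
    case (Suc k)
    show ?case
    proof (cases "upper_central G k = carrier G")
      case True
      then show ?thesis using upper_central_mono[of k] upper_central_subset[of "Suc k"] by blast
    next
      case False
      have "finite (upper_central G (Suc k))"
        using fin upper_central_subset finite_subset by blast
      then have "card (upper_central G k) < card (upper_central G (Suc k))"
        using p_group_upper_central_grows[OF fin p ord False] by (rule psubset_card_mono)
      then show ?thesis using Suc.IH False by simp
    qed
  qed simp
  moreover have "card (upper_central G (Suc (card (carrier G)))) \<le> card (carrier G)"
    using card_mono[OF fin upper_central_subset] .
  ultimately have "upper_central G (Suc (card (carrier G))) = carrier G"
    by (meson Suc_n_not_le_n le_trans)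
  then show ?thesis by (rule that)
qed

lemma obtain_subgroup_central_mod:
  assumes top: "upper_central G N = carrier G" and a: "a \<in> carrier G" "a \<noteq> \<one>"
  obtains Z where "subgroup Z G" "a \<notin> Z" "\<forall>g\<in>carrier G. inv a \<otimes> g \<otimes> a \<otimes> inv g \<in> Z"
proof -
  obtain k where k: "a \<notin> upper_central G k" "a \<in> upper_central G (Suc k)"
    using ex_least_nat_less[of "\<lambda>k. a \<in> upper_central G k" N] top a by auto
  have "inv a \<otimes> g \<otimes> a \<otimes> inv g \<in> upper_central G k" if "g \<in> carrier G" for g
    using k(2) that by (auto dest: bspec[of _ _ "inv g"])
  then show ?thesis using that upper_central_subgroup k(1) by blast
qed

lemma subgroup_nat_pow_closed: "subgroup H G \<Longrightarrow> h \<in> H \<Longrightarrow> h [^] (n::nat) \<in> H"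
  using subgroup_int_pow_closed[of H h "int n"] by (simp add: int_pow_int)

lemma commuting_nat_pows:
  assumes "x \<otimes> y = y \<otimes> x" and "x \<in> carrier G" and "y \<in> carrier G"
  shows "x [^] (m::nat) \<otimes> y [^] (n::nat) = y [^] n \<otimes> x [^] m"
proof -
  have "x \<otimes> y [^] n = y [^] n \<otimes> x"
    using group_commutes_pow[OF assms(1)[symmetric] assms(3,2)] by simp
  then show ?thesis using group_commutes_pow[of x "y [^] n" m] assms(2,3) by simp
qed

lemma nat_pow_mod_eq:
  assumes "x \<in> carrier G" and "x [^] p = \<one>"
  shows "x [^] (n::nat) = x [^] (n mod p)"
proof -
  have "x [^] n = (x [^] p) [^] (n div p) \<otimes> x [^] (n mod p)"
    using assms(1) by (simp add: nat_pow_mult nat_pow_pow)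
  then show ?thesis using assms by simp
qed

lemma subgroup_mem_of_pow_coprime:
  assumes "subgroup H G" and x: "x \<in> carrier G" and "x [^] t \<in> H"
    and "coprime t (ord x)" and "t \<noteq> 0"
  shows "x \<in> H"
proof -
  obtain u v where uv: "t * u = ord x * v + 1"
    using bezout_nat[OF \<open>t \<noteq> 0\<close>, of "ord x"] \<open>coprime t (ord x)\<close> by auto
  have "(x [^] t) [^] u = x"
    using x by (simp add: nat_pow_pow uv nat_pow_mult[symmetric] pow_eq_id)
  then show ?thesis using subgroup_nat_pow_closed[OF assms(1,3), of u] by simp
qed

lemma ord_eq_prime:
  assumes "x \<in> carrier G" "x \<noteq> \<one>" "x [^] p = \<one>" "Factorial_Ring.prime p"
  shows "ord x = p"
  using assms pow_eq_id[of x p] ord_eq_1[of x] by (metis prime_nat_iff)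

lemma prime_ord_pow_notin_subgroup:
  assumes "subgroup Z G" "a \<in> carrier G" "a \<notin> Z" "ord a = p" "Factorial_Ring.prime p"
    and "0 < t" "t < p"
  shows "a [^] t \<notin> Z"
proof
  assume "a [^] t \<in> Z"
  moreover have "coprime t (ord a)"
    using assms(4-7) prime_imp_coprime[of p t] by (simp add: coprime_commute nat_dvd_not_less)
  ultimately show False
    using subgroup_mem_of_pow_coprime assms(1-3,6) by blast
qed

lemma pow_mem_left_coset_imp_eq_one:
  assumes Z: "subgroup Z G" and a: "a \<in> carrier G" "a \<notin> Z" "ord a = p"
    and p: "Factorial_Ring.prime p" and "i < p" and a_i: "inv a \<otimes> a [^] i \<in> Z"
  shows "i = 1"
proof (rule ccontr)
  assume "i \<noteq> 1"
  show False
  proof (cases "i = 0")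
    case True
    then have "inv a \<in> Z" using a_i a(1) by simp
    then have "inv (inv a) \<in> Z" by (rule subgroup.m_inv_closed[OF Z])
    then show False using a by simp
  next
    case False
    then have "a [^] (i - 1) \<in> Z"
      using a_i a(1) nat_pow_Suc2[of a "i - 1"] by simp
    moreover have "0 < i - 1" "i - 1 < p" using False \<open>i \<noteq> 1\<close> \<open>i < p\<close> by auto
    ultimately show False
      using prime_ord_pow_notin_subgroup[OF Z a(1,2,3) p] by blast
  qed
qed

lemma commutator_in_derived:
  assumes "x \<in> carrier G" "y \<in> carrier G"
  shows "inv x \<otimes> y \<otimes> x \<otimes> inv y \<in> derived G (carrier G)"
proof -
  have "inv x \<otimes> y \<otimes> inv (inv x) \<otimes> inv y \<in> derived_set G (carrier G)"
    using assms by blast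
  then show ?thesis
    using assms unfolding derived_def by (simp add: generate.incl)
qed

lemma commutator_eq_one_iff:
  assumes "a \<in> carrier G" "w \<in> carrier G"
  shows "inv a \<otimes> w \<otimes> a \<otimes> inv w = \<one> \<longleftrightarrow> a \<otimes> w = w \<otimes> a"
proof -
  have "inv a \<otimes> w \<otimes> a \<otimes> inv w = \<one> \<longleftrightarrow> inv a \<otimes> w \<otimes> a = \<one> \<otimes> w"
    using assms by (intro inv_solve_right') auto
  also have "\<dots> \<longleftrightarrow> w \<otimes> a = a \<otimes> w"
    using assms by (simp add: m_assoc inv_solve_left')
  finally show ?thesis by auto
qed

lemma normalizes_inv_conj_mem:
  assumes "normalizes G a E" and "a \<in> carrier G" and "E \<subseteq> carrier G" and "w \<in> E"
  shows "inv a \<otimes> w \<otimes> a \<in> E"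
proof -
  obtain y where "y \<in> E" "w = a \<otimes> y \<otimes> inv a"
    using assms(1,4) unfolding normalizes_def by blast
  moreover have "inv a \<otimes> (a \<otimes> y \<otimes> inv a) \<otimes> a = y"
    using assms(2,3) \<open>y \<in> E\<close> by (auto simp: m_assoc)
  ultimately show ?thesis by simp
qed

lemma conj_nat_pow_eq:
  assumes a: "a \<in> carrier G" and w: "w \<in> carrier G" and c: "c \<in> carrier G"
    and conj: "w \<otimes> a \<otimes> inv w = a \<otimes> c" and comm: "w \<otimes> c = c \<otimes> w"
  shows "w [^] m \<otimes> a \<otimes> inv (w [^] m) = a \<otimes> c [^] (m::nat)"
proof (induction m)
  case (Suc m)
  have "w [^] Suc m \<otimes> a \<otimes> inv (w [^] Suc m) = (w \<otimes> w [^] m) \<otimes> a \<otimes> inv (w \<otimes> w [^] m)"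
    by (simp only: nat_pow_Suc2[OF w])
  also have "\<dots> = w \<otimes> (w [^] m \<otimes> a \<otimes> inv (w [^] m)) \<otimes> inv w"
    using a w by (simp add: m_assoc inv_mult_group)
  also have "\<dots> = (w \<otimes> a \<otimes> inv w) \<otimes> (w \<otimes> c [^] m \<otimes> inv w)"
    using Suc.IH a w c by (simp add: m_assoc)
  also have "w \<otimes> c [^] m = c [^] m \<otimes> w"
    using group_commutes_pow[OF comm[symmetric] c w] by simp
  also have "c [^] m \<otimes> w \<otimes> inv w = c [^] m"
    using w c by (simp add: m_assoc)
  also have "(w \<otimes> a \<otimes> inv w) \<otimes> c [^] m = a \<otimes> (c \<otimes> c [^] m)"
    using conj a c by (simp add: m_assoc)
  finally show ?case by (simp only: nat_pow_Suc2[OF c])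
qed (simp add: a)

lemma mult_pow_mem_conj_class:
  assumes "a \<in> carrier G" and w: "w \<in> carrier G" and "c \<in> carrier G"
    and "w \<otimes> a \<otimes> inv w = a \<otimes> c" and "w \<otimes> c = c \<otimes> w"
  shows "a \<otimes> c [^] (m::nat) \<in> conj_class G a"
  using conj_nat_pow_eq[OF assms, of m, symmetric] w unfolding conj_class_def by blast

lemma obtain_commuting_commutator:
  assumes top: "upper_central G N = carrier G" and a: "a \<in> carrier G" and E: "subgroup E G"
    and inv_conj_closed: "\<forall>w\<in>E. inv a \<otimes> w \<otimes> a \<in> E" and noncentral: "\<exists>w\<in>E. a \<otimes> w \<noteq> w \<otimes> a"
  obtains w where "w \<in> E" "inv a \<otimes> w \<otimes> a \<otimes> inv w \<noteq> \<one>"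
    "a \<otimes> (inv a \<otimes> w \<otimes> a \<otimes> inv w) = (inv a \<otimes> w \<otimes> a \<otimes> inv w) \<otimes> a"
proof -
  define noncommuting_at where "noncommuting_at j \<longleftrightarrow> (\<exists>w\<in>E \<inter> upper_central G j. inv a \<otimes> w \<otimes> a \<otimes> inv w \<noteq> \<one>)" for j
  have E_carrier: "E \<subseteq> carrier G" using E subgroup.subset by blast
  have "noncommuting_at N"
    using noncentral commutator_eq_one_iff a E_carrier top unfolding noncommuting_at_def by blast
  moreover have "\<not> noncommuting_at 0" using a unfolding noncommuting_at_def by auto
  ultimately obtain k where "\<not> noncommuting_at k" "noncommuting_at (Suc k)"
    using ex_least_nat_less[of noncommuting_at N] by auto
  then obtain w where w: "w \<in> E" "w \<in> upper_central G (Suc k)" "inv a \<otimes> w \<otimes> a \<otimes> inv w \<noteq> \<one>"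
    unfolding noncommuting_at_def by blast
  have "inv a \<otimes> w \<otimes> a \<otimes> inv w \<in> E"
    using inv_conj_closed w(1) E by (simp add: subgroup.m_closed subgroup.m_inv_closed)
  moreover have "inv a \<otimes> w \<otimes> a \<otimes> inv w \<in> upper_central G k"
    using upper_central_Suc_commutator[OF w(2) a] .
  ultimately have "a \<otimes> (inv a \<otimes> w \<otimes> a \<otimes> inv w) = (inv a \<otimes> w \<otimes> a \<otimes> inv w) \<otimes> a"
    using \<open>\<not> noncommuting_at k\<close> commutator_eq_one_iff a E_carrier unfolding noncommuting_at_def by blast
  then show ?thesis using that w by blast
qed

lemma obtain_commutator_of_prime_order:
  assumes top: "upper_central G N = carrier G" and p: "Factorial_Ring.prime p" and a: "a \<in> carrier G"
    and E: "elem_abelian_subgroup G p E" "normalizes G a E" "\<not> centralizes G a E"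
  obtains w c where "w \<in> carrier G" "c = inv a \<otimes> w \<otimes> a \<otimes> inv w" "ord c = p"
    "a \<otimes> c = c \<otimes> a" "w \<otimes> c = c \<otimes> w"
proof -
  have sub: "subgroup E G" and comm: "\<forall>x\<in>E. \<forall>y\<in>E. x \<otimes> y = y \<otimes> x"
    and exp: "\<forall>x\<in>E. x [^] p = \<one>"
    using E(1) unfolding elem_abelian_subgroup_def by auto
  have E_carrier: "E \<subseteq> carrier G" using sub subgroup.subset by blast
  have inv_conj: "\<forall>w\<in>E. inv a \<otimes> w \<otimes> a \<in> E"
    using normalizes_inv_conj_mem[OF E(2) a E_carrier] by blast
  have "\<exists>w\<in>E. a \<otimes> w \<noteq> w \<otimes> a" using E(3) unfolding centralizes_def by blast
  then obtain w where w: "w \<in> E" and c: "inv a \<otimes> w \<otimes> a \<otimes> inv w \<noteq> \<one>"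
    and ac: "a \<otimes> (inv a \<otimes> w \<otimes> a \<otimes> inv w) = (inv a \<otimes> w \<otimes> a \<otimes> inv w) \<otimes> a"
    by (rule obtain_commuting_commutator[OF top a sub inv_conj])
  have "inv a \<otimes> w \<otimes> a \<otimes> inv w \<in> E"
    using inv_conj w sub by (simp add: subgroup.m_closed subgroup.m_inv_closed)
  then show ?thesis
    using that[OF _ refl ord_eq_prime[OF _ c _ p] ac] w E_carrier comm exp by blast
qed

end

definition pow_products :: "('a, 'b) monoid_scheme \<Rightarrow> nat \<Rightarrow> 'a \<Rightarrow> 'a \<Rightarrow> 'a set" where
  "pow_products G p a c = {a [^]\<^bsub>G\<^esub> i \<otimes>\<^bsub>G\<^esub> c [^]\<^bsub>G\<^esub> l | i l. i < p \<and> l < p}"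

context group
begin

lemma commuting_pow_products_mult:
  assumes a: "a \<in> carrier G" and c: "c \<in> carrier G" and ac: "a \<otimes> c = c \<otimes> a"
  shows "(a [^] (i::nat) \<otimes> c [^] (l::nat)) \<otimes> (a [^] (i'::nat) \<otimes> c [^] (l'::nat))
    = a [^] (i + i') \<otimes> c [^] (l + l')"
proof -
  have "c [^] l \<otimes> a [^] i' = a [^] i' \<otimes> c [^] l"
    by (rule commuting_nat_pows[OF ac a c, symmetric])
  then have "(a [^] i \<otimes> c [^] l) \<otimes> (a [^] i' \<otimes> c [^] l') = (a [^] i \<otimes> a [^] i') \<otimes> (c [^] l \<otimes> c [^] l')"
    using a c by (simp add: m_assoc flip: m_assoc[of "c [^] l"])
  then show ?thesis using a c by (simp add: nat_pow_mult)
qed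

lemma pow_products_memI:
  assumes a: "a \<in> carrier G" "a [^] p = \<one>" and c: "c \<in> carrier G" "c [^] p = \<one>" and "p \<noteq> 0"
  shows "a [^] (i::nat) \<otimes> c [^] (l::nat) \<in> pow_products G p a c"
proof -
  have "a [^] i \<otimes> c [^] l = a [^] (i mod p) \<otimes> c [^] (l mod p)"
    using nat_pow_mod_eq[OF a] nat_pow_mod_eq[OF c] by metis
  moreover have "i mod p < p" "l mod p < p" using \<open>p \<noteq> 0\<close> by auto
  ultimately show ?thesis unfolding pow_products_def by blast
qed

lemma pow_products_elem_abelian:
  assumes a: "a \<in> carrier G" "a [^] p = \<one>" and c: "c \<in> carrier G" "c [^] p = \<one>"
    and ac: "a \<otimes> c = c \<otimes> a" and "p \<noteq> 0"
  shows "elem_abelian_subgroup G p (pow_products G p a c)"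
  unfolding elem_abelian_subgroup_def
proof (intro conjI ballI)
  let ?X = "pow_products G p a c"
  note memI = pow_products_memI[OF a c \<open>p \<noteq> 0\<close>]
  note mult = commuting_pow_products_mult[OF a(1) c(1) ac]
  show "subgroup ?X G"
  proof (rule subgroupI)
    show "?X \<subseteq> carrier G" using a c unfolding pow_products_def by auto
    show "?X \<noteq> {}" using memI by blast
  next
    fix y assume "y \<in> ?X"
    then obtain i l :: nat where il: "i < p" "l < p" "y = a [^] i \<otimes> c [^] l"
      unfolding pow_products_def by blast
    have "(a [^] (p - i) \<otimes> c [^] (p - l)) \<otimes> y = a [^] p \<otimes> c [^] p"
      using il mult[of "p - i" "p - l" i l] by simp
    then have "(a [^] (p - i) \<otimes> c [^] (p - l)) \<otimes> y = \<one>"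
      using a c by simp
    then have "inv y = a [^] (p - i) \<otimes> c [^] (p - l)"
      using il a c by (intro inv_equality) auto
    then show "inv y \<in> ?X" using memI by simp
  next
    fix y z assume "y \<in> ?X" "z \<in> ?X"
    moreover obtain i l i' l' :: nat where "y = a [^] i \<otimes> c [^] l" "z = a [^] i' \<otimes> c [^] l'"
      using \<open>y \<in> ?X\<close> \<open>z \<in> ?X\<close> unfolding pow_products_def by blast
    ultimately show "y \<otimes> z \<in> ?X" using mult memI by simp
  qed
  show "y \<otimes> z = z \<otimes> y" if "y \<in> ?X" "z \<in> ?X" for y z
    using that mult unfolding pow_products_def by (auto simp: add.commute)
  show "y [^] p = \<one>" if "y \<in> ?X" for y
  proof -
    obtain i l :: nat where y: "y = a [^] i \<otimes> c [^] l" using \<open>y \<in> ?X\<close> unfolding pow_products_def by blast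
    have "y [^] p = (a [^] i) [^] p \<otimes> (c [^] l) [^] p"
      unfolding y using pow_mult_distrib[OF commuting_nat_pows[OF ac a(1) c(1)]] a c by simp
    also have "\<dots> = (a [^] p) [^] i \<otimes> (c [^] p) [^] l"
      using a(1) c(1) by (simp add: nat_pow_pow mult.commute)
    finally show ?thesis using a c by simp
  qed
qed

lemma card_pow_products:
  assumes p: "Factorial_Ring.prime p" and a: "a \<in> carrier G" "ord a = p"
    and c: "c \<in> carrier G" "ord c = p" and Z: "subgroup Z G" "c \<in> Z" "a \<notin> Z"
  shows "card (pow_products G p a c) = p ^ 2"
proof -
  have c_inj: "l = l'" if "c [^] l = c [^] l'" "l < p" "l' < p" for l l' :: nat
    using inj_onD[OF ord_inj[OF c(1)]] that c(2) by auto
  have a_exp_eq: "i = i'"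
    if eq: "a [^] i \<otimes> c [^] l = a [^] i' \<otimes> c [^] l'" and "i \<le> i'" "i' < p" for i i' l l' :: nat
  proof (rule ccontr)
    assume "i \<noteq> i'"
    have "a [^] i' = a [^] i \<otimes> a [^] (i' - i)"
      using a \<open>i \<le> i'\<close> by (simp add: nat_pow_mult)
    then have "a [^] i \<otimes> c [^] l = a [^] i \<otimes> (a [^] (i' - i) \<otimes> c [^] l')"
      using eq a c by (simp add: m_assoc)
    then have "a [^] (i' - i) = c [^] l \<otimes> inv (c [^] l')"
      using a c by (simp add: m_assoc)
    moreover have "c [^] l \<otimes> inv (c [^] l') \<in> Z"
      using Z by (simp add: subgroup.m_closed subgroup.m_inv_closed subgroup_nat_pow_closed)
    moreover have "0 < i' - i" "i' - i < p" using that \<open>i \<noteq> i'\<close> by auto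
    ultimately show False
      using prime_ord_pow_notin_subgroup[OF Z(1) a(1) Z(3) a(2) p, of "i' - i"] by simp
  qed
  have "inj_on (\<lambda>(i, l). a [^] i \<otimes> c [^] l) ({..<p} \<times> {..<p})"
  proof (rule inj_onI, clarify)
    fix i l i' l' :: nat
    assume ranges: "i < p" "l < p" "i' < p" "l' < p"
      and eq: "a [^] i \<otimes> c [^] l = a [^] i' \<otimes> c [^] l'"
    then have "i = i'"
      using a_exp_eq[of i l i' l'] a_exp_eq[of i' l' i l] by (cases "i \<le> i'") auto
    then show "i = i' \<and> l = l'"
      using eq a c c_inj ranges by simp
  qed
  moreover have "pow_products G p a c = (\<lambda>(i, l). a [^] i \<otimes> c [^] l) ` ({..<p} \<times> {..<p})"
    unfolding pow_products_def by auto
  ultimately show ?thesis by (simp add: card_image power2_eq_square)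
qed

lemma card_conj_class_inter_pow_products:
  assumes p: "Factorial_Ring.prime p" and a: "a \<in> carrier G" "ord a = p"
    and c: "c \<in> carrier G" "ord c = p" and Z: "subgroup Z G" "c \<in> Z" "a \<notin> Z"
    and central_mod: "\<forall>g\<in>carrier G. inv a \<otimes> g \<otimes> a \<otimes> inv g \<in> Z"
    and conjugates: "\<forall>l::nat. a \<otimes> c [^] l \<in> conj_class G a"
  shows "card (conj_class G a \<inter> pow_products G p a c) = p"
proof -
  have c_pow: "c [^] l \<in> Z" for l :: nat
    using Z by (simp add: subgroup_nat_pow_closed)
  have "conj_class G a \<inter> pow_products G p a c = (\<lambda>l. a \<otimes> c [^] l) ` {..<p}"
  proof (intro equalityI subsetI)
    fix y assume y: "y \<in> conj_class G a \<inter> pow_products G p a c"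
    then obtain g where g: "g \<in> carrier G" "y = g \<otimes> a \<otimes> inv g"
      unfolding conj_class_def by blast
    obtain i l :: nat where il: "i < p" "l < p" "y = a [^] i \<otimes> c [^] l"
      using y unfolding pow_products_def by blast
    have "inv a \<otimes> (a [^] i \<otimes> c [^] l) \<in> Z"
      using central_mod g il a by (simp add: m_assoc)
    then have "(inv a \<otimes> (a [^] i \<otimes> c [^] l)) \<otimes> inv (c [^] l) \<in> Z"
      using Z(1) c_pow by (simp add: subgroup.m_closed subgroup.m_inv_closed)
    then have "inv a \<otimes> a [^] i \<in> Z"
      using a c by (simp add: m_assoc)
    then have "i = 1"
      using pow_mem_left_coset_imp_eq_one[OF Z(1) a(1) Z(3) a(2) p il(1)] by blast
    then show "y \<in> (\<lambda>l. a \<otimes> c [^] l) ` {..<p}" using il a by simp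
  next
    fix y assume "y \<in> (\<lambda>l. a \<otimes> c [^] l) ` {..<p}"
    then obtain l :: nat where "y = a [^] (1::nat) \<otimes> c [^] l" using a by auto
    moreover have "a [^] (1::nat) \<otimes> c [^] l \<in> pow_products G p a c"
      using pow_ord_eq_1[OF a(1)] pow_ord_eq_1[OF c(1)] prime_gt_0_nat[OF p]
      unfolding a(2) c(2) by (intro pow_products_memI[OF a(1) _ c(1)]) auto
    ultimately show "y \<in> conj_class G a \<inter> pow_products G p a c"
      using conjugates a by simp
  qed
  moreover have "inj_on (\<lambda>l. a \<otimes> c [^] l) {..<p}"
    using inj_onD[OF ord_inj[OF c(1)]] a c by (intro inj_onI) auto
  ultimately show ?thesis by (simp add: card_image)
qed

end

theorem lemma2p3:
  fixes P (structure) and p :: nat and a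
  assumes "Factorial_Ring.prime p"
    and "group P"
    and "finite (carrier P)"
    and "\<exists>n. order P = p ^ n"
    and "a \<in> carrier P"
    and "group.ord P a = p"
    and "\<exists>E. elem_abelian_subgroup P p E \<and> normalizes P a E \<and> \<not> centralizes P a E"
  shows "\<exists>Q. elem_abelian_subgroup P p Q \<and> card Q = p ^ 2
           \<and> card (conj_class P a \<inter> Q) = p
           \<and> Q \<inter> derived P (carrier P) \<noteq> {\<one>\<^bsub>P\<^esub>}"
proof -
  interpret group P by (rule assms(2))
  note p = assms(1) and a = assms(5,6)
  obtain N where top: "upper_central P N = carrier P"
    using p_group_upper_central_top[OF assms(3) p] assms(4) by blast
  obtain E where E: "elem_abelian_subgroup P p E" "normalizes P a E" "\<not> centralizes P a E"
    using assms(7) by blast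
  obtain w c where w: "w \<in> carrier P" and c: "c = inv a \<otimes> w \<otimes> a \<otimes> inv w" "ord c = p"
    and ac: "a \<otimes> c = c \<otimes> a" and wc: "w \<otimes> c = c \<otimes> w"
    by (rule obtain_commutator_of_prime_order[OF top p a(1) E])
  have c_carrier: "c \<in> carrier P" using a w c(1) by simp
  have "a \<noteq> \<one>" "c \<noteq> \<one>" using ord_eq_1 a c c_carrier prime_gt_1_nat[OF p] by auto
  then obtain Z where Z: "subgroup Z P" "a \<notin> Z" "\<forall>g\<in>carrier P. inv a \<otimes> g \<otimes> a \<otimes> inv g \<in> Z"
    using obtain_subgroup_central_mod[OF top a(1)] by blast
  have "c \<in> Z" using Z(3) w c(1) by blast
  have "w \<otimes> a \<otimes> inv w = a \<otimes> c" using a w c(1) by (simp add: m_assoc)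
  then have conjugates: "\<forall>l::nat. a \<otimes> c [^] l \<in> conj_class P a"
    using mult_pow_mem_conj_class[OF a(1) w c_carrier _ wc] by blast
  let ?X = "pow_products P p a c"
  have "a [^] p = \<one>" "c [^] p = \<one>"
    using pow_ord_eq_1[OF a(1)] pow_ord_eq_1[OF c_carrier] unfolding a(2) c(2) by auto
  then have "elem_abelian_subgroup P p ?X" "c \<in> ?X"
    using pow_products_elem_abelian[OF a(1) _ c_carrier _ ac] prime_gt_0_nat[OF p]
      pow_products_memI[OF a(1) _ c_carrier, of p 0 1] c_carrier by simp_all
  moreover have "c \<in> derived P (carrier P)"
    using commutator_in_derived[OF a(1) w] c(1) by simp
  moreover have "card ?X = p ^ 2"
    by (rule card_pow_products[OF p a c_carrier c(2) Z(1) \<open>c \<in> Z\<close> Z(2)])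
  moreover have "card (conj_class P a \<inter> ?X) = p"
    by (rule card_conj_class_inter_pow_products[OF p a c_carrier c(2) Z(1) \<open>c \<in> Z\<close> Z(2,3) conjugates])
  ultimately show ?thesis using \<open>c \<noteq> \<one>\<close> by blast
qed

end
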